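(* Let $H(a,b,c)=C(a,b+c)-C(b,a+c)$. Then for all non-negative integers $a,b,c$, \[\frac{1}{4^c}H(a,b,c)=\sum_{j=1}^c\frac{1}{4^j}H(b+1,a+1,j-2).\]
   Context: $C(p,q)=\frac{(2p)!(2q)!}{p!(p+q)!q!}$ for non-negative integers $p,q$. Note $H(b+1,a+1,j-2)=C(b+1,a+j-1)-C(a+1,b+j-1)$, whose arguments are non-negative for $j\ge1$. *)

theory Defs
  imports Main "HOL.Rat"
begin

definition superC :: "nat \<Rightarrow> nat \<Rightarrow> rat" where
  "superC p q = of_nat (fact (2*p) * fact (2*q)) / of_nat (fact p * fact (p+q) * fact q)"

text \<open>H(a,b,c) = C(a,b+c) - C(b,a+c). The third argument is an integer so that
  H(b+1,a+1,j-2) with j = 1 (i.e. c = -1) makes sense; it is only used where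
  b+c and a+c are non-negative.\<close>
definition H :: "nat \<Rightarrow> nat \<Rightarrow> int \<Rightarrow> rat" where
  "H a b c = superC a (nat (int b + c)) - superC b (nat (int a + c))"

end

theory Submission
  imports Defs
begin

text \<open>The super Catalan numbers satisfy \<open>4 C(p,q) = C(p+1,q) + C(p,q+1)\<close>. Applied to both
  terms of \<open>H\<close> this gives \<open>H(a,b,c+1) = 4 H(a,b,c) + H(b+1,a+1,c-1)\<close>; dividing by
  \<open>4^(c+1)\<close> and telescoping down to \<open>H(a,b,0) = 0\<close> yields the identity.\<close>

lemma superC_eq: "superC p q = fact (2*p) * fact (2*q) / (fact p * fact (p+q) * fact q)"
  unfolding superC_def by (simp only: of_nat_mult of_nat_fact)

lemma superC_commute: "superC p q = superC q p"
  unfolding superC_eq by (simp add: add.commute mult_ac)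

lemma superC_Suc_left: "of_nat (p+q+1) * superC (Suc p) q = 2 * of_nat (2*p+1) * superC p q"
proof -
  define r s :: rat where "r = of_nat p + 1" and "s = of_nat (p+q+1)"
  have "r \<noteq> 0" "s \<noteq> 0"
    unfolding r_def s_def by (simp_all add: add_nonneg_eq_0_iff)
  have fact_Suc_expanded: "fact (2 * Suc p) = 2 * r * of_nat (2*p+1) * (fact (2*p) :: rat)"
    "fact (Suc p) = r * (fact p :: rat)" "fact (Suc p + q) = s * (fact (p+q) :: rat)"
    by (simp_all add: r_def s_def algebra_simps)
  have "s * superC (Suc p) q =
      s * (2 * r * of_nat (2*p+1) * fact (2*p) * fact (2*q) / (r * fact p * (s * fact (p+q)) * fact q))"
    unfolding superC_eq fact_Suc_expanded by (simp only: mult.assoc)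
  also have "\<dots> = 2 * of_nat (2*p+1) * superC p q"
    unfolding superC_eq using \<open>r \<noteq> 0\<close> \<open>s \<noteq> 0\<close> by (simp add: field_simps)
  finally show ?thesis
    unfolding s_def .
qed

lemma superC_Suc_right: "of_nat (p+q+1) * superC p (Suc q) = 2 * of_nat (2*q+1) * superC p q"
  using superC_Suc_left[of q p] by (simp add: superC_commute add.commute)

lemma superC_recurrence: "4 * superC p q = superC (Suc p) q + superC p (Suc q)"
proof -
  have "of_nat (p+q+1) * (superC (Suc p) q + superC p (Suc q)) = of_nat (p+q+1) * (4 * superC p q)"
    unfolding distrib_left superC_Suc_left superC_Suc_right by (simp add: algebra_simps)
  then show ?thesis by simp
qed

lemma H_0: "H a b 0 = 0"
  unfolding H_def by (simp add: superC_commute)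

lemma H_Suc: "H a b (int (Suc c)) = 4 * H a b (int c) + H (b+1) (a+1) (int c - 1)"
proof -
  have "nat (int b + int (Suc c)) = Suc (b + c)" "nat (int a + int (Suc c)) = Suc (a + c)"
    "nat (int (a+1) + (int c - 1)) = a + c" "nat (int (b+1) + (int c - 1)) = b + c"
    by simp_all
  then show ?thesis
    unfolding H_def using superC_recurrence[of a "b+c"] superC_recurrence[of b "a+c"] by simp
qed

theorem corollary8p10:
  fixes a b c :: nat
  shows "H a b (int c) / 4 ^ c = (\<Sum>j = 1..c. H (b+1) (a+1) (int j - 2) / 4 ^ j)"
proof (induction c)
  case 0
  show ?case by (simp add: H_0)
next
  case (Suc c)
  have "H a b (int (Suc c)) / 4 ^ Suc c =
      H a b (int c) / 4 ^ c + H (b+1) (a+1) (int (Suc c) - 2) / 4 ^ Suc c"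
    unfolding H_Suc by (simp add: field_simps)
  also have "\<dots> = (\<Sum>j = 1..Suc c. H (b+1) (a+1) (int j - 2) / 4 ^ j)"
    using Suc by simp
  finally show ?case .
qed

end
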